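(* Let $(X,\mu)$ be a measure space and $V$ a complex vector space of measurable complex-valued functions on $X$; for a real-valued measurable weight $\phi$ let $\mathcal H_\phi=\{f\in V:\int_X|f|^2e^{-\phi}d\mu<\infty\}$, assumed to be a Hilbert space with the $L^2(e^{-\phi}d\mu)$ norm on which point evaluations are bounded, with Bergman kernel $K_\phi$. Let $(\phi_t)_{t\in I}$, $I\subset\mathbb R$ an interval, be a family of such weight functions which is differentiable in $t$ at each point of $X$, with derivative $\dot\phi_t$ satisfying $\sup_{t\in I,\,x\in X}|\dot\phi_t(x)|<\infty$. Put $K_t=K_{\phi_t}$. Then $K_t(z,\zeta)$ is differentiable with respect to $t$, and for fixed $z,\zeta\in X$, $$\dot K_t(z,\zeta)=\int_X \dot{\phi_t}(w)\,K_t(z,w)\, K_t(w,\zeta)\, e^{-\phi_t(w)}\, d\mu(w).$$ Moreover, there is a constant $A$ depending only on the sup-norm of $\dot\phi$ such that for all $z\in X$ and all $\tau$ with $|\tau|\leq 1$ (and $t,t+\tau\in I$), $$\left|\frac{K_{t+\tau}(z,z)-K_t(z,z)}{\tau}\right|\leq A\, K_t(z,z).$$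
   Context: The Bergman kernel $K_\phi(z,\zeta)$ of $\mathcal H_\phi$ is the reproducing kernel: $K_\phi(\cdot,\zeta)\in\mathcal H_\phi$ and $f(\zeta)=\int_X f(w)\overline{K_\phi(w,\zeta)}e^{-\phi(w)}d\mu(w)$ for all $f\in\mathcal H_\phi$, with $K_\phi(z,w)=\overline{K_\phi(w,z)}$. $\dot K_t$ and $\dot\phi_t$ denote derivatives with respect to $t$. *)

theory Defs
  imports "HOL-Analysis.Analysis"
begin

definition fun_space :: "'a measure \<Rightarrow> ('a \<Rightarrow> complex) set \<Rightarrow> bool" where
  "fun_space M V \<longleftrightarrow> V \<subseteq> borel_measurable M \<and> (\<lambda>_. 0) \<in> V
     \<and> (\<forall>f\<in>V. \<forall>g\<in>V. (\<lambda>x. f x + g x) \<in> V)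
     \<and> (\<forall>c::complex. \<forall>f\<in>V. (\<lambda>x. c * f x) \<in> V)"

definition Hspace :: "'a measure \<Rightarrow> ('a \<Rightarrow> complex) set \<Rightarrow> ('a \<Rightarrow> real) \<Rightarrow> ('a \<Rightarrow> complex) set" where
  "Hspace M V \<phi> = {f \<in> V. (\<integral>\<^sup>+ w. ennreal ((cmod (f w))\<^sup>2 * exp (- \<phi> w)) \<partial>M) < \<infinity>}"

definition wnorm :: "'a measure \<Rightarrow> ('a \<Rightarrow> real) \<Rightarrow> ('a \<Rightarrow> complex) \<Rightarrow> real" where
  "wnorm M \<phi> f = sqrt (\<integral> w. (cmod (f w))\<^sup>2 * exp (- \<phi> w) \<partial>M)"

definition admissible_weight :: "'a measure \<Rightarrow> ('a \<Rightarrow> complex) set \<Rightarrow> ('a \<Rightarrow> real) \<Rightarrow> bool" where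
  "admissible_weight M V \<phi> \<longleftrightarrow>
     \<phi> \<in> borel_measurable M
     \<and> (\<forall>f\<in>Hspace M V \<phi>. wnorm M \<phi> f = 0 \<longrightarrow> f = (\<lambda>_. 0))
     \<and> (\<forall>F. (\<forall>n. F n \<in> Hspace M V \<phi>) \<longrightarrow>
            (\<forall>e>0. \<exists>N. \<forall>m\<ge>N. \<forall>n\<ge>N. wnorm M \<phi> (\<lambda>x. F m x - F n x) < e) \<longrightarrow>
            (\<exists>f\<in>Hspace M V \<phi>. (\<lambda>n. wnorm M \<phi> (\<lambda>x. F n x - f x)) \<longlonglongrightarrow> 0))
     \<and> (\<forall>z. \<exists>c. \<forall>f\<in>Hspace M V \<phi>. cmod (f z) \<le> c * wnorm M \<phi> f)"

definition bergman_kernel :: "'a measure \<Rightarrow> ('a \<Rightarrow> complex) set \<Rightarrow> ('a \<Rightarrow> real)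
    \<Rightarrow> ('a \<Rightarrow> 'a \<Rightarrow> complex) \<Rightarrow> bool" where
  "bergman_kernel M V \<phi> K \<longleftrightarrow>
     (\<forall>\<zeta>. (\<lambda>z. K z \<zeta>) \<in> Hspace M V \<phi>)
     \<and> (\<forall>f\<in>Hspace M V \<phi>. \<forall>\<zeta>.
          f \<zeta> = (\<integral> w. f w * cnj (K w \<zeta>) * complex_of_real (exp (- \<phi> w)) \<partial>M))
     \<and> (\<forall>z w. K z w = cnj (K w z))"

end

(*
  Since |phi_s - phi_t| <= C |s - t|, all the spaces H_{phi_t} coincide as sets. Reproducing
  K_s(.,zeta) in H_{phi_t} and K_t(.,z) in H_{phi_s} gives the key identity
    K_s(z,zeta) - K_t(z,zeta) = int K_s(w,zeta) K_t(z,w) (e^{-phi_t(w)} - e^{-phi_s(w)}) dmu(w).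
  Bounding the weight difference by C|s-t| e^{C|s-t|/2} e^{-(phi_s+phi_t)/2} and applying
  Cauchy-Schwarz bounds |K_s(z,zeta) - K_t(z,zeta)| by C|s-t| e^{C|s-t|/2} K_s(zeta,zeta)^{1/2} K_t(z,z)^{1/2};
  on the diagonal this yields the estimate for K_t(z,z), and in particular its continuity in t.
  After division by s - t, the identity splits into an integral against the fixed kernel K_t,
  which converges by dominated convergence, and an error bounded by
  ||K_s(.,zeta) - K_t(.,zeta)||_t ||K_t(.,z)||_t. The error vanishes in the limit since
  ||K_s(.,zeta) - K_t(.,zeta)||_t^2 = int |K_s(w,zeta)|^2 e^{-phi_t} dmu + K_t(zeta,zeta) - 2 K_s(zeta,zeta)
  and the first term is at most e^{C|s-t|} K_s(zeta,zeta).
*)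

theory Submission
  imports Defs
begin

lemma abs_diff_le_of_le_sqrt_mult:
  fixes a b d :: real
  assumes "a \<ge> 0" "b \<ge> 0" "d \<ge> 0" "\<bar>a - b\<bar> \<le> d * sqrt a * sqrt b"
  shows "\<bar>a - b\<bar> \<le> d * (1 + d) * b"
proof -
  define x y where "x = sqrt a" "y = sqrt b"
  have xy: "x \<ge> 0" "y \<ge> 0" "a = x * x" "b = y * y" and ab: "\<bar>x * x - y * y\<bar> \<le> d * x * y"
    using assms by (auto simp: x_y_def)
  have "x \<le> (1 + d) * y"
  proof (rule ccontr)
    assume "\<not> ?thesis"
    then have gt: "y < x - d * y" by (simp add: algebra_simps)
    then have "x * y < x * (x - d * y)"
      using xy mult_nonneg_nonneg[OF assms(3) xy(2)] by (intro mult_strict_left_mono) linarith+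
    moreover have "y * y \<le> x * y"
      using gt xy mult_nonneg_nonneg[OF assms(3) xy(2)] by (intro mult_right_mono) auto
    ultimately show False
      using ab by (auto simp: algebra_simps)
  qed
  then have "d * x * y \<le> d * ((1 + d) * y) * y"
    using xy assms(3) by (intro mult_right_mono mult_left_mono) auto
  then show ?thesis
    using ab xy by (simp add: algebra_simps)
qed

lemma abs_exp_minus_diff_le_sqrt:
  fixes u v L :: real
  assumes "\<bar>u - v\<bar> \<le> L"
  shows "\<bar>exp (-u) - exp (-v)\<bar> \<le> L * exp (L / 2) * sqrt (exp (-u) * exp (-v))"
proof -
  have key: "\<bar>exp (-u) - exp (-v)\<bar> \<le> L * exp (L / 2) * sqrt (exp (-u) * exp (-v))"
    if "u \<le> v" "v - u \<le> L" for u v :: real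
  proof -
    define d where "d = v - u"
    have "sqrt (exp (-u) * exp (-v)) = exp (- (u + v) / 2)"
      by (rule real_sqrt_unique) (auto simp: power2_eq_square field_simps simp flip: exp_add)
    then have "\<bar>exp (-u) - exp (-v)\<bar> = sqrt (exp (-u) * exp (-v)) * (exp (d / 2) * (1 - exp (-d)))"
      using that by (simp add: d_def field_simps flip: exp_add)
    also have "\<dots> \<le> sqrt (exp (-u) * exp (-v)) * (exp (L / 2) * L)"
    proof -
      have "1 - exp (-d) \<le> L"
        using that exp_ge_add_one_self[of "-d"] by (simp add: d_def del: exp_ge_add_one_self)
      then show ?thesis
        using that by (intro mult_left_mono mult_mono) (auto simp: d_def)
    qed
    finally show ?thesis by (simp add: mult_ac)
  qed
  show ?thesis
  proof (cases "u \<le> v")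
    case True
    then show ?thesis using key[of u v] assms by simp
  next
    case False
    then show ?thesis using key[of v u] assms by (simp add: abs_minus_commute ac_simps)
  qed
qed

lemma abs_exp_minus_diff_le:
  fixes u v L :: real
  assumes "\<bar>u - v\<bar> \<le> L"
  shows "\<bar>exp (-u) - exp (-v)\<bar> \<le> L * exp L * exp (-u)"
proof -
  have L: "L \<ge> 0" using assms by linarith
  have "sqrt (exp (-u) * exp (-v)) = sqrt (exp (u - v) * exp (-u) * exp (-u))"
    by (simp flip: exp_add)
  also have "\<dots> = sqrt (exp (u - v)) * exp (-u)"
    by (simp add: real_sqrt_mult)
  also have "\<dots> \<le> exp (L / 2) * exp (-u)"
    using assms by (intro mult_right_mono real_le_lsqrt) (auto simp flip: exp_double)
  finally have "L * exp (L / 2) * sqrt (exp (-u) * exp (-v)) \<le> L * exp (L / 2) * (exp (L / 2) * exp (-u))"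
    using L by (intro mult_left_mono) auto
  also have "\<dots> = L * exp L * exp (-u)"
    by (simp add: mult_ac flip: exp_add)
  finally show ?thesis
    using abs_exp_minus_diff_le_sqrt[OF assms] by linarith
qed

lemma power2_norm_diff_le:
  fixes x y :: "'a::real_normed_vector"
  shows "(norm (x - y))\<^sup>2 \<le> 2 * (norm x)\<^sup>2 + 2 * (norm y)\<^sup>2"
proof -
  have "(norm (x - y))\<^sup>2 \<le> (norm x + norm y)\<^sup>2"
    by (intro power_mono norm_triangle_ineq4) auto
  also have "\<dots> \<le> 2 * (norm x)\<^sup>2 + 2 * (norm y)\<^sup>2"
    using zero_le_power2[of "norm x - norm y"] by (simp add: power2_sum power2_diff del: zero_le_power2)
  finally show ?thesis .
qed

lemma integrable_mult_of_square_integrable: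
  fixes f g :: "'a \<Rightarrow> real"
  assumes "f \<in> borel_measurable M" "g \<in> borel_measurable M"
    and "integrable M (\<lambda>x. f x ^ 2)" "integrable M (\<lambda>x. g x ^ 2)"
  shows "integrable M (\<lambda>x. f x * g x)"
proof (rule Bochner_Integration.integrable_bound)
  show "integrable M (\<lambda>x. (f x ^ 2 + g x ^ 2) / 2)"
    using assms by auto
  have "norm (f x * g x) \<le> norm ((f x ^ 2 + g x ^ 2) / 2)" for x
  proof -
    have "0 \<le> (\<bar>f x\<bar> - \<bar>g x\<bar>)\<^sup>2" by simp
    then show ?thesis by (simp add: power2_diff abs_mult)
  qed
  then show "AE x in M. norm (f x * g x) \<le> norm ((f x ^ 2 + g x ^ 2) / 2)"
    by simp
qed (use assms in auto)

lemma integral_mult_le_sqrt_integral_power2: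
  fixes f g :: "'a \<Rightarrow> real"
  assumes [measurable]: "f \<in> borel_measurable M" "g \<in> borel_measurable M"
    and f2: "integrable M (\<lambda>x. f x ^ 2)" and g2: "integrable M (\<lambda>x. g x ^ 2)"
  shows "(\<integral>x. f x * g x \<partial>M) \<le> sqrt (\<integral>x. f x ^ 2 \<partial>M) * sqrt (\<integral>x. g x ^ 2 \<partial>M)"
proof -
  have fg: "integrable M (\<lambda>x. \<bar>f x\<bar> * \<bar>g x\<bar>)"
    using integrable_mult_of_square_integrable[of "\<lambda>x. \<bar>f x\<bar>" M "\<lambda>x. \<bar>g x\<bar>"] f2 g2 by simp
  have nn: "(\<integral>\<^sup>+x. ennreal (h x) \<partial>M) = ennreal (\<integral>x. h x \<partial>M)"
    if "integrable M h" "\<And>x. h x \<ge> 0" for h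
    using that by (intro nn_integral_eq_integral) auto
  have "(\<integral>\<^sup>+x. ennreal (\<bar>f x\<bar> * \<bar>g x\<bar>) \<partial>M) ^ 2
      \<le> (\<integral>\<^sup>+x. ennreal (f x ^ 2) \<partial>M) * (\<integral>\<^sup>+x. ennreal (g x ^ 2) \<partial>M)"
    using Cauchy_Schwarz_nn_integral[of "\<lambda>x. ennreal \<bar>f x\<bar>" M "\<lambda>x. ennreal \<bar>g x\<bar>"]
    by (simp add: ennreal_power flip: ennreal_mult)
  then have "ennreal ((\<integral>x. \<bar>f x\<bar> * \<bar>g x\<bar> \<partial>M) ^ 2) \<le> ennreal ((\<integral>x. f x ^ 2 \<partial>M) * (\<integral>x. g x ^ 2 \<partial>M))"
    using fg f2 g2 by (simp add: nn ennreal_power flip: ennreal_mult)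
  then have "(\<integral>x. \<bar>f x\<bar> * \<bar>g x\<bar> \<partial>M) ^ 2 \<le> (\<integral>x. f x ^ 2 \<partial>M) * (\<integral>x. g x ^ 2 \<partial>M)"
    by (simp add: ennreal_le_iff)
  then have "(\<integral>x. \<bar>f x\<bar> * \<bar>g x\<bar> \<partial>M) \<le> sqrt (\<integral>x. f x ^ 2 \<partial>M) * sqrt (\<integral>x. g x ^ 2 \<partial>M)"
    by (simp add: real_le_rsqrt flip: real_sqrt_mult)
  moreover have "(\<integral>x. f x * g x \<partial>M) \<le> (\<integral>x. \<bar>f x\<bar> * \<bar>g x\<bar> \<partial>M)"
    using integrable_mult_of_square_integrable[OF assms] fg by (intro integral_mono) (auto simp flip: abs_mult)
  ultimately show ?thesis by linarith
qed

lemma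
  fixes f g :: "'a \<Rightarrow> complex" and h \<rho> \<sigma> :: "'a \<Rightarrow> real"
  assumes [measurable]: "f \<in> borel_measurable M" "g \<in> borel_measurable M" "h \<in> borel_measurable M"
    "\<rho> \<in> borel_measurable M" "\<sigma> \<in> borel_measurable M"
    and f2: "integrable M (\<lambda>w. (cmod (f w))\<^sup>2 * \<rho> w)" and g2: "integrable M (\<lambda>w. (cmod (g w))\<^sup>2 * \<sigma> w)"
    and e: "\<And>w. \<rho> w \<ge> 0" "\<And>w. \<sigma> w \<ge> 0"
    and h: "\<And>w. \<bar>h w\<bar> \<le> c * sqrt (\<rho> w) * sqrt (\<sigma> w)" and c: "c \<ge> 0"
  shows integrable_mult_of_weighted_square_integrable:
      "integrable M (\<lambda>w. f w * g w * complex_of_real (h w))"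
    and norm_integral_mult_le_weighted:
      "norm (\<integral> w. f w * g w * complex_of_real (h w) \<partial>M)
        \<le> c * sqrt (\<integral> w. (cmod (f w))\<^sup>2 * \<rho> w \<partial>M) * sqrt (\<integral> w. (cmod (g w))\<^sup>2 * \<sigma> w \<partial>M)"
proof -
  define a where "a w = cmod (f w) * sqrt (\<rho> w)" for w
  define b where "b w = cmod (g w) * sqrt (\<sigma> w)" for w
  have [measurable]: "a \<in> borel_measurable M" "b \<in> borel_measurable M"
    unfolding a_def b_def by measurable
  have a2: "(\<lambda>w. a w ^ 2) = (\<lambda>w. (cmod (f w))\<^sup>2 * \<rho> w)" and b2: "(\<lambda>w. b w ^ 2) = (\<lambda>w. (cmod (g w))\<^sup>2 * \<sigma> w)"
    using e by (simp_all add: a_def b_def power_mult_distrib)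
  have ab: "integrable M (\<lambda>w. c * (a w * b w))"
    using integrable_mult_of_square_integrable[of a M b] f2 g2 by (simp add: a2 b2)
  have le: "norm (f w * g w * complex_of_real (h w)) \<le> c * (a w * b w)" for w
    using mult_left_mono[OF h[of w], of "cmod (f w) * cmod (g w)"] by (simp add: a_def b_def norm_mult ac_simps)
  show int: "integrable M (\<lambda>w. f w * g w * complex_of_real (h w))"
    using le by (intro Bochner_Integration.integrable_bound[OF ab]) (auto intro!: AE_I2 order_trans[OF le abs_ge_self])
  have "norm (\<integral> w. f w * g w * complex_of_real (h w) \<partial>M) \<le> (\<integral> w. c * (a w * b w) \<partial>M)"
    using le int ab by (intro order_trans[OF integral_norm_bound] integral_mono) auto
  also have "\<dots> \<le> c * (sqrt (\<integral> w. a w ^ 2 \<partial>M) * sqrt (\<integral> w. b w ^ 2 \<partial>M))"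
    using integral_mult_le_sqrt_integral_power2[of a M b] f2 g2 c by (simp add: a2 b2 mult_left_mono)
  finally show "norm (\<integral> w. f w * g w * complex_of_real (h w) \<partial>M)
      \<le> c * sqrt (\<integral> w. (cmod (f w))\<^sup>2 * \<rho> w \<partial>M) * sqrt (\<integral> w. (cmod (g w))\<^sup>2 * \<sigma> w \<partial>M)"
    by (simp add: a2 b2 mult_ac)
qed

lemma integral_dominated_convergence_at_within:
  fixes s :: "'c::first_countable_topology \<Rightarrow> 'a \<Rightarrow> 'b::{banach, second_countable_topology}"
  assumes "integrable M w" "f \<in> borel_measurable M"
    and "\<forall>\<^sub>F y in at t within S. s y \<in> borel_measurable M"
    and "\<forall>\<^sub>F y in at t within S. AE x in M. norm (s y x) \<le> w x"
    and lim: "AE x in M. ((\<lambda>y. s y x) \<longlongrightarrow> f x) (at t within S)"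
  shows "((\<lambda>y. integral\<^sup>L M (s y)) \<longlongrightarrow> integral\<^sup>L M f) (at t within S)"
  unfolding tendsto_at_iff_sequentially
proof (intro allI impI)
  fix X :: "nat \<Rightarrow> 'c"
  assume "\<forall>i. X i \<in> S - {t}" "X \<longlonglongrightarrow> t"
  then have X: "filterlim X (at t within S) sequentially"
    by (auto simp: filterlim_at eventually_sequentially)
  obtain N where N: "\<And>n. n \<ge> N \<Longrightarrow> s (X n) \<in> borel_measurable M \<and> (AE x in M. norm (s (X n) x) \<le> w x)"
    using filterlim_iff[THEN iffD1, OF X, rule_format, OF eventually_conj[OF assms(3,4)]]
    by (auto simp: eventually_sequentially)
  show "((\<lambda>y. integral\<^sup>L M (s y)) \<circ> X) \<longlonglongrightarrow> integral\<^sup>L M f"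
    unfolding comp_def
  proof (rule LIMSEQ_offset[where k=N], rule integral_dominated_convergence[where w=w])
    show "AE x in M. (\<lambda>n. s (X (n + N)) x) \<longlonglongrightarrow> f x"
      using lim by eventually_elim (intro LIMSEQ_ignore_initial_segment filterlim_compose[OF _ X])
  qed (use assms N in auto)
qed

lemma eventually_at_within_mem_abs_diff_le:
  fixes t d :: real
  assumes "d > 0"
  shows "\<forall>\<^sub>F s in at t within S. s \<in> S \<and> \<bar>s - t\<bar> \<le> d"
  unfolding eventually_at using assms by (intro exI[of _ d]) (auto simp: dist_real_def)

lemma has_vector_derivative_of_difference_quotient:
  fixes f :: "real \<Rightarrow> 'a::real_normed_vector"
  assumes "((\<lambda>y. (f y - f x) /\<^sub>R (y - x)) \<longlongrightarrow> D) (at x within S)"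
  shows "(f has_vector_derivative D) (at x within S)"
  unfolding has_vector_derivative_def has_derivative_iff_norm
proof (intro conjI bounded_linear_scaleR_left)
  have "f y - f x - (y - x) *\<^sub>R D = (y - x) *\<^sub>R ((f y - f x) /\<^sub>R (y - x) - D)" if "y \<noteq> x" for y
    using that by (simp add: scaleR_diff_right)
  then have "\<forall>\<^sub>F y in at x within S. norm ((f y - f x) /\<^sub>R (y - x) - D)
      = norm (f y - f x - (y - x) *\<^sub>R D) / norm (y - x)"
    unfolding eventually_at_filter by (intro always_eventually allI impI) simp
  moreover have "((\<lambda>y. norm ((f y - f x) /\<^sub>R (y - x) - D)) \<longlongrightarrow> 0) (at x within S)"
    using tendsto_norm_zero[OF LIM_zero[OF assms]] .
  ultimately show "((\<lambda>y. norm (f y - f x - (y - x) *\<^sub>R D) / norm (y - x)) \<longlongrightarrow> 0) (at x within S)"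
    by (rule Lim_transform_eventually[rotated])
qed

lemma borel_measurable_has_real_derivative_within:
  fixes \<phi> :: "real \<Rightarrow> 'a \<Rightarrow> real"
  assumes "t islimpt I" "\<And>s. s \<in> I \<Longrightarrow> \<phi> s \<in> borel_measurable M" "\<phi> t \<in> borel_measurable M"
    and "\<And>x. ((\<lambda>s. \<phi> s x) has_real_derivative \<phi>' x) (at t within I)"
  shows "\<phi>' \<in> borel_measurable M"
proof -
  obtain X where XI: "\<And>n. X n \<in> I - {t}" and "X \<longlonglongrightarrow> t"
    using assms(1) unfolding islimpt_sequential by blast
  then have X: "filterlim X (at t within I) sequentially"
    by (auto simp: filterlim_at eventually_sequentially)
  show ?thesis
  proof (rule borel_measurable_LIMSEQ_real[where u="\<lambda>n x. (\<phi> (X n) x - \<phi> t x) / (X n - t)"])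
    show "(\<lambda>n. (\<phi> (X n) x - \<phi> t x) / (X n - t)) \<longlonglongrightarrow> \<phi>' x" for x
      using assms(4)[of x] by (intro filterlim_compose[OF _ X]) (simp add: has_field_derivative_iff)
    show "(\<lambda>x. (\<phi> (X n) x - \<phi> t x) / (X n - t)) \<in> borel_measurable M" for n
    proof -
      have "X n \<in> I" using XI[of n] by blast
      note [measurable] = assms(2)[OF this] assms(3)
      show ?thesis by measurable
    qed
  qed
qed

lemma borel_measurable_cnj [measurable]:
  "f \<in> borel_measurable M \<Longrightarrow> (\<lambda>x. cnj (f x)) \<in> borel_measurable M"
  by (rule borel_measurable_continuous_on[where f=cnj]) (auto intro: continuous_intros)

section \<open>Weighted spaces of functions\<close>

lemma fun_space_measurable:
  "fun_space M V \<Longrightarrow> f \<in> V \<Longrightarrow> f \<in> borel_measurable M"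
  unfolding fun_space_def by (meson subsetD)

lemma fun_space_diff:
  assumes "fun_space M V" "f \<in> V" "g \<in> V"
  shows "(\<lambda>x. f x - g x) \<in> V"
proof -
  from assms(1) have add: "\<forall>f\<in>V. \<forall>g\<in>V. (\<lambda>x. f x + g x) \<in> V"
    and smult: "\<forall>c::complex. \<forall>f\<in>V. (\<lambda>x. c * f x) \<in> V"
    by (simp_all add: fun_space_def)
  have "(\<lambda>x. f x + - 1 * g x) \<in> V"
    using bspec[OF bspec[OF add assms(2)] bspec[OF spec[OF smult, of "- 1"] assms(3)]] by simp
  then show ?thesis by simp
qed

lemma Hspace_iff_integrable:
  assumes "fun_space M V" "\<phi> \<in> borel_measurable M"
  shows "f \<in> Hspace M V \<phi> \<longleftrightarrow> f \<in> V \<and> integrable M (\<lambda>w. (cmod (f w))\<^sup>2 * exp (- \<phi> w))"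
proof (cases "f \<in> V")
  case True
  note [measurable] = fun_space_measurable[OF assms(1) True] assms(2)
  have "integrable M (\<lambda>w. (cmod (f w))\<^sup>2 * exp (- \<phi> w))
      \<longleftrightarrow> (\<integral>\<^sup>+ w. ennreal ((cmod (f w))\<^sup>2 * exp (- \<phi> w)) \<partial>M) < \<infinity>"
    unfolding integrable_iff_bounded by auto
  then show ?thesis
    using True by (simp add: Hspace_def)
qed (simp add: Hspace_def)

lemma Hspace_subset_of_le_add:
  assumes V: "fun_space M V" and [measurable]: "\<phi> \<in> borel_measurable M" "\<psi> \<in> borel_measurable M"
    and le: "\<And>w. \<phi> w \<le> \<psi> w + L"
  shows "Hspace M V \<phi> \<subseteq> Hspace M V \<psi>"
proof
  fix f assume "f \<in> Hspace M V \<phi>"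
  then have f: "f \<in> V" "integrable M (\<lambda>w. (cmod (f w))\<^sup>2 * exp (- \<phi> w))"
    using Hspace_iff_integrable[OF V] by auto
  note [measurable] = fun_space_measurable[OF V f(1)]
  have "integrable M (\<lambda>w. (cmod (f w))\<^sup>2 * exp (- \<psi> w))"
  proof (rule Bochner_Integration.integrable_bound)
    show "integrable M (\<lambda>w. exp L * ((cmod (f w))\<^sup>2 * exp (- \<phi> w)))"
      using f by auto
    have "exp (- \<psi> w) \<le> exp L * exp (- \<phi> w)" for w
      using le[of w] by (simp flip: exp_add)
    then have "(cmod (f w))\<^sup>2 * exp (- \<psi> w) \<le> (cmod (f w))\<^sup>2 * (exp L * exp (- \<phi> w))" for w
      by (intro mult_left_mono) auto
    then show "AE w in M. norm ((cmod (f w))\<^sup>2 * exp (- \<psi> w)) \<le> norm (exp L * ((cmod (f w))\<^sup>2 * exp (- \<phi> w)))"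
      by (simp add: ac_simps)
  qed measurable
  then show "f \<in> Hspace M V \<psi>"
    using f Hspace_iff_integrable[OF V] by auto
qed

lemma Hspace_diff:
  assumes V: "fun_space M V" and [measurable]: "\<phi> \<in> borel_measurable M"
    and f: "f \<in> Hspace M V \<phi>" and g: "g \<in> Hspace M V \<phi>"
  shows "(\<lambda>x. f x - g x) \<in> Hspace M V \<phi>"
proof -
  have fV: "f \<in> V" and gV: "g \<in> V"
    and fi: "integrable M (\<lambda>w. (cmod (f w))\<^sup>2 * exp (- \<phi> w))"
    and gi: "integrable M (\<lambda>w. (cmod (g w))\<^sup>2 * exp (- \<phi> w))"
    using f g Hspace_iff_integrable[OF V] by auto
  note [measurable] = fun_space_measurable[OF V fV] fun_space_measurable[OF V gV]
  have "(\<lambda>x. f x - g x) \<in> V"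
    using fun_space_diff[OF V fV gV] .
  moreover have "integrable M (\<lambda>w. (cmod (f w - g w))\<^sup>2 * exp (- \<phi> w))"
  proof (rule Bochner_Integration.integrable_bound)
    show "integrable M (\<lambda>w. 2 * ((cmod (f w))\<^sup>2 * exp (- \<phi> w)) + 2 * ((cmod (g w))\<^sup>2 * exp (- \<phi> w)))"
      using fi gi by auto
    have "(cmod (f w - g w))\<^sup>2 * exp (- \<phi> w)
        \<le> 2 * ((cmod (f w))\<^sup>2 * exp (- \<phi> w)) + 2 * ((cmod (g w))\<^sup>2 * exp (- \<phi> w))" for w
      using mult_right_mono[OF power2_norm_diff_le[of "f w" "g w"], of "exp (- \<phi> w)"] by (simp add: distrib_right)
    then show "AE w in M. norm ((cmod (f w - g w))\<^sup>2 * exp (- \<phi> w))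
        \<le> norm (2 * ((cmod (f w))\<^sup>2 * exp (- \<phi> w)) + 2 * ((cmod (g w))\<^sup>2 * exp (- \<phi> w)))"
      by (intro AE_I2 order_trans[OF _ abs_ge_self]) simp
  qed measurable
  ultimately show ?thesis
    using Hspace_iff_integrable[OF V] by simp
qed

lemma bergman_kernel_diag:
  assumes "bergman_kernel M V \<phi> K"
  shows "K z z = complex_of_real (\<integral> w. (cmod (K w z))\<^sup>2 * exp (- \<phi> w) \<partial>M)"
proof -
  have H: "(\<lambda>w. K w z) \<in> Hspace M V \<phi>"
    and R: "\<forall>f\<in>Hspace M V \<phi>. \<forall>\<zeta>. f \<zeta> = (\<integral> w. f w * cnj (K w \<zeta>) * complex_of_real (exp (- \<phi> w)) \<partial>M)"
    using assms unfolding bergman_kernel_def by blast+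
  have "K z z = (\<integral> w. K w z * cnj (K w z) * complex_of_real (exp (- \<phi> w)) \<partial>M)"
    using spec[OF bspec[OF R H], of z] by simp
  also have "\<dots> = (\<integral> w. complex_of_real ((cmod (K w z))\<^sup>2 * exp (- \<phi> w)) \<partial>M)"
    by (simp add: complex_mult_cnj cmod_power2)
  finally show ?thesis by (simp only: integral_complex_of_real)
qed

lemma admissible_weight_measurable: "admissible_weight M V \<phi> \<Longrightarrow> \<phi> \<in> borel_measurable M"
  by (simp add: admissible_weight_def)

section \<open>A differentiable family of weights\<close>

text \<open>Of admissible_weight only measurability is assumed: completeness and bounded
  point evaluations merely guarantee that the kernel exists, and the argument uses nothing but
  its reproducing property.\<close>

locale bergman_weight_family =
  fixes M :: "'a measure" and V :: "('a \<Rightarrow> complex) set" and I :: "real set"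
    and \<phi> :: "real \<Rightarrow> 'a \<Rightarrow> real" and \<phi>' :: "real \<Rightarrow> 'a \<Rightarrow> real"
    and K :: "real \<Rightarrow> 'a \<Rightarrow> 'a \<Rightarrow> complex" and C :: real
  assumes fun_space: "fun_space M V" and interval: "is_interval I"
    and weight_measurable: "\<And>t. t \<in> I \<Longrightarrow> \<phi> t \<in> borel_measurable M"
    and weight_derivative: "\<And>t x. t \<in> I \<Longrightarrow> ((\<lambda>s. \<phi> s x) has_real_derivative \<phi>' t x) (at t within I)"
    and weight_derivative_bound: "\<And>t x. t \<in> I \<Longrightarrow> \<bar>\<phi>' t x\<bar> \<le> C"
    and kernel: "\<And>t. t \<in> I \<Longrightarrow> bergman_kernel M V (\<phi> t) (K t)"
begin

lemma C_nonneg: "t \<in> I \<Longrightarrow> 0 \<le> C"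
  using weight_derivative_bound[of t undefined] by linarith

lemma weight_lipschitz: "s \<in> I \<Longrightarrow> t \<in> I \<Longrightarrow> \<bar>\<phi> s x - \<phi> t x\<bar> \<le> C * \<bar>s - t\<bar>"
  using field_differentiable_bound[of I "\<lambda>s. \<phi> s x" "\<lambda>t. \<phi>' t x" C s t]
    is_interval_convex[OF interval] weight_derivative weight_derivative_bound by auto

lemma exp_weight_le: "s \<in> I \<Longrightarrow> t \<in> I \<Longrightarrow> exp (- \<phi> t w) \<le> exp (C * \<bar>s - t\<bar>) * exp (- \<phi> s w)"
  using weight_lipschitz[of s t w] by (simp flip: exp_add)

lemma exp_weight_measurable: "t \<in> I \<Longrightarrow> (\<lambda>w. exp (- \<phi> t w)) \<in> borel_measurable M"
  using weight_measurable by measurable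

lemma Hspace_eq:
  assumes "s \<in> I" "t \<in> I"
  shows "Hspace M V (\<phi> s) = Hspace M V (\<phi> t)"
proof -
  have "\<phi> s w \<le> \<phi> t w + C * \<bar>s - t\<bar>" "\<phi> t w \<le> \<phi> s w + C * \<bar>s - t\<bar>" for w
    using weight_lipschitz[OF assms, of w] by (auto simp: abs_le_iff)
  then show ?thesis
    using assms by (intro equalityI Hspace_subset_of_le_add[OF fun_space] weight_measurable)
qed

lemma kernel_cnj: "t \<in> I \<Longrightarrow> K t z w = cnj (K t w z)"
  using kernel unfolding bergman_kernel_def by blast

lemma kernel_reproducing:
  assumes "t \<in> I" "f \<in> Hspace M V (\<phi> t)"
  shows "f \<zeta> = (\<integral> w. f w * cnj (K t w \<zeta>) * complex_of_real (exp (- \<phi> t w)) \<partial>M)"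
proof -
  have "\<forall>f\<in>Hspace M V (\<phi> t). \<forall>\<zeta>. f \<zeta> = (\<integral> w. f w * cnj (K t w \<zeta>) * complex_of_real (exp (- \<phi> t w)) \<partial>M)"
    using kernel[OF assms(1)] unfolding bergman_kernel_def by (rule conjunct1[OF conjunct2])
  from spec[OF bspec[OF this assms(2)], of \<zeta>] show ?thesis .
qed

lemma kernel_in_Hspace:
  assumes "s \<in> I" "t \<in> I"
  shows "(\<lambda>w. K s w \<zeta>) \<in> Hspace M V (\<phi> t)"
proof -
  have "(\<lambda>w. K s w \<zeta>) \<in> Hspace M V (\<phi> s)"
    using kernel[OF assms(1)] unfolding bergman_kernel_def by blast
  then show ?thesis
    using Hspace_eq[OF assms] by simp
qed

lemma kernel_square_integrable:
  assumes "s \<in> I" "t \<in> I"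
  shows "integrable M (\<lambda>w. (cmod (K s w \<zeta>))\<^sup>2 * exp (- \<phi> t w))"
  using kernel_in_Hspace[OF assms] Hspace_iff_integrable[OF fun_space weight_measurable[OF assms(2)]]
  by simp

lemma kernel_square_integrable':
  assumes "s \<in> I" "t \<in> I"
  shows "integrable M (\<lambda>w. (cmod (K s z w))\<^sup>2 * exp (- \<phi> t w))"
  using kernel_square_integrable[OF assms, of z] by (simp add: kernel_cnj[OF assms(1), of z])

lemma kernel_measurable: "s \<in> I \<Longrightarrow> (\<lambda>w. K s w \<zeta>) \<in> borel_measurable M"
  using kernel_in_Hspace[of s s \<zeta>] fun_space_measurable[OF fun_space]
  by (simp add: Hspace_def)

lemma kernel_measurable': "s \<in> I \<Longrightarrow> (\<lambda>w. K s z w) \<in> borel_measurable M"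
  using borel_measurable_cnj[OF kernel_measurable[of s z]] by (simp add: kernel_cnj[of s z])

lemma integrable_kernel_mult:
  assumes f: "f \<in> Hspace M V (\<phi> u)" and t: "t \<in> I" and u: "u \<in> I"
    and h: "h \<in> borel_measurable M" "\<And>w. \<bar>h w\<bar> \<le> c * exp (- \<phi> u w)"
  shows "integrable M (\<lambda>w. f w * K t z w * complex_of_real (h w))"
proof (rule integrable_mult_of_weighted_square_integrable[where \<rho>="\<lambda>w. exp (- \<phi> u w)" and c="\<bar>c\<bar>"])
  have fV: "f \<in> V" and "integrable M (\<lambda>w. (cmod (f w))\<^sup>2 * exp (- \<phi> u w))"
    using f Hspace_iff_integrable[OF fun_space weight_measurable[OF u]] by simp_all
  then show "f \<in> borel_measurable M" "integrable M (\<lambda>w. (cmod (f w))\<^sup>2 * exp (- \<phi> u w))"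
    using fun_space_measurable[OF fun_space] by simp_all
  show "\<bar>h w\<bar> \<le> \<bar>c\<bar> * sqrt (exp (- \<phi> u w)) * sqrt (exp (- \<phi> u w))" for w
    using h(2)[of w] by (simp add: mult.assoc) (meson abs_ge_self mult_right_mono exp_ge_zero order_trans)
qed (use kernel_measurable'[OF t] kernel_square_integrable'[OF t u] h(1) exp_weight_measurable[OF u] in simp_all)

definition kernel_norm2 :: "real \<Rightarrow> 'a \<Rightarrow> real" where
  "kernel_norm2 t z = (\<integral> w. (cmod (K t w z))\<^sup>2 * exp (- \<phi> t w) \<partial>M)"

lemma kernel_norm2_nonneg: "kernel_norm2 t z \<ge> 0"
  unfolding kernel_norm2_def by (rule integral_nonneg_AE) auto

lemma kernel_diag: "t \<in> I \<Longrightarrow> K t z z = complex_of_real (kernel_norm2 t z)"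
  unfolding kernel_norm2_def by (rule bergman_kernel_diag[OF kernel])

lemma kernel_diff_eq:
  assumes s: "s \<in> I" and t: "t \<in> I"
  shows "K s z \<zeta> - K t z \<zeta>
    = (\<integral> w. K s w \<zeta> * K t z w * complex_of_real (exp (- \<phi> t w) - exp (- \<phi> s w)) \<partial>M)"
proof -
  have int: "integrable M (\<lambda>w. K s w \<zeta> * K t z w * complex_of_real (exp (- \<phi> u w)))" if "u \<in> I" for u
    using that s t by (intro integrable_kernel_mult[where c=1] kernel_in_Hspace exp_weight_measurable) auto
  have "K s z \<zeta> = (\<integral> w. K s w \<zeta> * K t z w * complex_of_real (exp (- \<phi> t w)) \<partial>M)"
    using kernel_reproducing[OF t kernel_in_Hspace[OF s t, of \<zeta>], of z] by (simp add: kernel_cnj[OF t, of z])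
  moreover have "K t z \<zeta> = (\<integral> w. K s w \<zeta> * K t z w * complex_of_real (exp (- \<phi> s w)) \<partial>M)"
  proof -
    have "K t z \<zeta> = cnj (\<integral> w. K t w z * cnj (K s w \<zeta>) * complex_of_real (exp (- \<phi> s w)) \<partial>M)"
      using kernel_reproducing[OF s kernel_in_Hspace[OF t s, of z], of \<zeta>] kernel_cnj[OF t, of z \<zeta>] by simp
    also have "\<dots> = (\<integral> w. cnj (K t w z * cnj (K s w \<zeta>) * complex_of_real (exp (- \<phi> s w))) \<partial>M)"
      by (rule Bochner_Integration.integral_cnj[symmetric])
    also have "\<dots> = (\<integral> w. K s w \<zeta> * K t z w * complex_of_real (exp (- \<phi> s w)) \<partial>M)"
      by (simp add: kernel_cnj[OF t, of z] mult_ac)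
    finally show ?thesis .
  qed
  ultimately show ?thesis
    using int[OF s] int[OF t] by (simp add: algebra_simps flip: Bochner_Integration.integral_diff)
qed

lemma kernel_diff_bound:
  assumes s: "s \<in> I" and t: "t \<in> I"
  shows "cmod (K s z \<zeta> - K t z \<zeta>)
    \<le> C * \<bar>s - t\<bar> * exp (C * \<bar>s - t\<bar> / 2) * sqrt (kernel_norm2 s \<zeta>) * sqrt (kernel_norm2 t z)"
  unfolding kernel_diff_eq[OF s t]
proof (rule order_trans[OF norm_integral_mult_le_weighted[where \<rho>="\<lambda>w. exp (- \<phi> s w)" and \<sigma>="\<lambda>w. exp (- \<phi> t w)"]])
  show "\<bar>exp (- \<phi> t w) - exp (- \<phi> s w)\<bar>
      \<le> C * \<bar>s - t\<bar> * exp (C * \<bar>s - t\<bar> / 2) * sqrt (exp (- \<phi> s w)) * sqrt (exp (- \<phi> t w))" for w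
    using abs_exp_minus_diff_le_sqrt[OF weight_lipschitz[OF t s, of w]]
    by (simp add: abs_minus_commute real_sqrt_mult mult_ac)
  show "C * \<bar>s - t\<bar> * exp (C * \<bar>s - t\<bar> / 2) * sqrt (\<integral> w. (cmod (K s w \<zeta>))\<^sup>2 * exp (- \<phi> s w) \<partial>M)
      * sqrt (\<integral> w. (cmod (K t z w))\<^sup>2 * exp (- \<phi> t w) \<partial>M)
    \<le> C * \<bar>s - t\<bar> * exp (C * \<bar>s - t\<bar> / 2) * sqrt (kernel_norm2 s \<zeta>) * sqrt (kernel_norm2 t z)"
    by (simp add: kernel_norm2_def kernel_cnj[OF t, of z])
qed (use s t C_nonneg[OF s] kernel_square_integrable kernel_square_integrable' in
      \<open>auto intro: kernel_measurable kernel_measurable' exp_weight_measurable borel_measurable_diff\<close>)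

lemma kernel_norm2_diff_bound:
  assumes s: "s \<in> I" and t: "t \<in> I"
  defines "d \<equiv> C * \<bar>s - t\<bar> * exp (C * \<bar>s - t\<bar> / 2)"
  shows "\<bar>kernel_norm2 s z - kernel_norm2 t z\<bar> \<le> d * (1 + d) * kernel_norm2 t z"
proof (rule abs_diff_le_of_le_sqrt_mult[OF kernel_norm2_nonneg kernel_norm2_nonneg])
  show "d \<ge> 0"
    using C_nonneg[OF s] by (simp add: d_def)
  show "\<bar>kernel_norm2 s z - kernel_norm2 t z\<bar> \<le> d * sqrt (kernel_norm2 s z) * sqrt (kernel_norm2 t z)"
    using kernel_diff_bound[OF s t, of z z] by (simp add: kernel_diag s t d_def flip: of_real_diff)
qed

lemma kernel_diag_difference_quotient_bound:
  assumes t: "t \<in> I" and s: "t + \<tau> \<in> I" and \<tau>: "\<bar>\<tau>\<bar> \<le> 1"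
  shows "cmod ((K (t + \<tau>) z z - K t z z) / complex_of_real \<tau>)
    \<le> C * exp (C / 2) * (1 + C * exp (C / 2)) * cmod (K t z z)"
proof (cases "\<tau> = 0")
  case False
  define c where "c = C * exp (C / 2)"
  define d where "d = C * \<bar>\<tau>\<bar> * exp (C * \<bar>\<tau>\<bar> / 2)"
  have C: "C \<ge> 0" using C_nonneg[OF t] .
  have "C * \<bar>\<tau>\<bar> * exp (C * \<bar>\<tau>\<bar> / 2) \<le> C * \<bar>\<tau>\<bar> * exp (C / 2)"
    using C \<tau> by (intro mult_left_mono) (auto simp: mult_left_le)
  then have d: "0 \<le> d" "d \<le> c * \<bar>\<tau>\<bar>" "d \<le> c"
    using C \<tau> by (auto simp: d_def c_def mult_ac intro: order_trans[OF _ mult_left_le])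
  have "\<bar>kernel_norm2 (t + \<tau>) z - kernel_norm2 t z\<bar> \<le> d * (1 + d) * kernel_norm2 t z"
    using kernel_norm2_diff_bound[OF s t, of z] by (simp add: d_def)
  also have "\<dots> \<le> (c * \<bar>\<tau>\<bar>) * (1 + c) * kernel_norm2 t z"
    using d kernel_norm2_nonneg by (intro mult_right_mono mult_mono) auto
  finally have "\<bar>kernel_norm2 (t + \<tau>) z - kernel_norm2 t z\<bar> \<le> (c * \<bar>\<tau>\<bar>) * (1 + c) * kernel_norm2 t z" .
  then have "\<bar>kernel_norm2 (t + \<tau>) z - kernel_norm2 t z\<bar> / \<bar>\<tau>\<bar> \<le> c * (1 + c) * kernel_norm2 t z"
    using False by (simp add: pos_divide_le_eq mult_ac)
  then show ?thesis
    by (simp add: kernel_diag s t norm_divide c_def kernel_norm2_nonneg flip: of_real_diff)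
qed (use C_nonneg[OF t] in simp)

lemma kernel_norm2_tendsto:
  assumes t: "t \<in> I"
  shows "((\<lambda>s. kernel_norm2 s z) \<longlongrightarrow> kernel_norm2 t z) (at t within I)"
proof -
  define d where "d s = C * \<bar>s - t\<bar> * exp (C * \<bar>s - t\<bar> / 2)" for s
  have "((\<lambda>s. d s * (1 + d s) * kernel_norm2 t z) \<longlongrightarrow> d t * (1 + d t) * kernel_norm2 t z) (at t within I)"
    unfolding d_def by (intro tendsto_intros) auto
  then have "((\<lambda>s. d s * (1 + d s) * kernel_norm2 t z) \<longlongrightarrow> 0) (at t within I)"
    by (simp add: d_def)
  moreover have "\<forall>\<^sub>F s in at t within I. norm (kernel_norm2 s z - kernel_norm2 t z) \<le> d s * (1 + d s) * kernel_norm2 t z"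
    unfolding eventually_at_filter d_def
    by (intro always_eventually allI impI) (simp add: kernel_norm2_diff_bound t)
  ultimately have "((\<lambda>s. kernel_norm2 s z - kernel_norm2 t z) \<longlongrightarrow> 0) (at t within I)"
    by (rule Lim_null_comparison[rotated])
  then show ?thesis
    by (rule LIM_zero_cancel)
qed

definition kernel_dist2 :: "real \<Rightarrow> real \<Rightarrow> 'a \<Rightarrow> real" where
  "kernel_dist2 t s \<zeta> = (\<integral> w. (cmod (K s w \<zeta> - K t w \<zeta>))\<^sup>2 * exp (- \<phi> t w) \<partial>M)"

lemma kernel_dist2_eq:
  assumes s: "s \<in> I" and t: "t \<in> I"
  shows "kernel_dist2 t s \<zeta>
    = (\<integral> w. (cmod (K s w \<zeta>))\<^sup>2 * exp (- \<phi> t w) \<partial>M) + kernel_norm2 t \<zeta> - 2 * kernel_norm2 s \<zeta>"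
proof -
  define J where "J = (\<lambda>w. K s w \<zeta> * K t \<zeta> w * complex_of_real (exp (- \<phi> t w)))"
  have J: "integrable M J"
    unfolding J_def using s t
    by (intro integrable_kernel_mult[where c=1 and u=t] kernel_in_Hspace exp_weight_measurable) auto
  have "integral\<^sup>L M J = K s \<zeta> \<zeta>"
    using kernel_reproducing[OF t kernel_in_Hspace[OF s t, of \<zeta>], of \<zeta>] by (simp add: J_def kernel_cnj[OF t, of \<zeta>])
  then have ReJ: "(\<integral> w. Re (J w) \<partial>M) = kernel_norm2 s \<zeta>"
    using integral_bounded_linear[OF bounded_linear_Re J] by (simp add: kernel_diag s)
  have "(cmod (K s w \<zeta> - K t w \<zeta>))\<^sup>2 * exp (- \<phi> t w)
      = (cmod (K s w \<zeta>))\<^sup>2 * exp (- \<phi> t w) + (cmod (K t w \<zeta>))\<^sup>2 * exp (- \<phi> t w) - 2 * Re (J w)" for w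
    by (simp add: J_def kernel_cnj[OF t, of \<zeta>] cmod_power2 power2_diff algebra_simps)
  then have "kernel_dist2 t s \<zeta> = (\<integral> w. (cmod (K s w \<zeta>))\<^sup>2 * exp (- \<phi> t w)
      + (cmod (K t w \<zeta>))\<^sup>2 * exp (- \<phi> t w) - 2 * Re (J w) \<partial>M)"
    by (simp add: kernel_dist2_def)
  also have "\<dots> = (\<integral> w. (cmod (K s w \<zeta>))\<^sup>2 * exp (- \<phi> t w) \<partial>M) + kernel_norm2 t \<zeta> - 2 * (\<integral> w. Re (J w) \<partial>M)"
    using kernel_square_integrable[OF s t] kernel_square_integrable[OF t t] integrable_bounded_linear[OF bounded_linear_Re J]
    by (simp add: kernel_norm2_def)
  finally show ?thesis
    by (simp add: ReJ)
qed

lemma kernel_dist2_tendsto: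
  assumes t: "t \<in> I"
  shows "((\<lambda>s. kernel_dist2 t s \<zeta>) \<longlongrightarrow> 0) (at t within I)"
proof (rule Lim_null_comparison)
  show "\<forall>\<^sub>F s in at t within I. norm (kernel_dist2 t s \<zeta>)
      \<le> exp (C * \<bar>s - t\<bar>) * kernel_norm2 s \<zeta> + kernel_norm2 t \<zeta> - 2 * kernel_norm2 s \<zeta>"
    unfolding eventually_at_filter
  proof (intro always_eventually allI impI)
    fix s assume s: "s \<in> I"
    note [measurable] = kernel_measurable[OF s] kernel_measurable[OF t] exp_weight_measurable[OF t]
    have E: "kernel_dist2 t s \<zeta> \<ge> 0"
      unfolding kernel_dist2_def by (rule integral_nonneg_AE) auto
    have "(cmod (K s w \<zeta>))\<^sup>2 * exp (- \<phi> t w) \<le> exp (C * \<bar>s - t\<bar>) * ((cmod (K s w \<zeta>))\<^sup>2 * exp (- \<phi> s w))" for w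
      using mult_left_mono[OF exp_weight_le[OF s t, of w], of "(cmod (K s w \<zeta>))\<^sup>2"] by (simp add: ac_simps)
    then have "(\<integral> w. (cmod (K s w \<zeta>))\<^sup>2 * exp (- \<phi> t w) \<partial>M)
        \<le> (\<integral> w. exp (C * \<bar>s - t\<bar>) * ((cmod (K s w \<zeta>))\<^sup>2 * exp (- \<phi> s w)) \<partial>M)"
      using s t by (intro integral_mono integrable_mult_right kernel_square_integrable)
    then show "norm (kernel_dist2 t s \<zeta>)
        \<le> exp (C * \<bar>s - t\<bar>) * kernel_norm2 s \<zeta> + kernel_norm2 t \<zeta> - 2 * kernel_norm2 s \<zeta>"
      using E by (simp add: kernel_dist2_eq[OF s t] kernel_norm2_def)
  qed
  have "((\<lambda>s. exp (C * \<bar>s - t\<bar>) * kernel_norm2 s \<zeta> + kernel_norm2 t \<zeta> - 2 * kernel_norm2 s \<zeta>)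
      \<longlongrightarrow> exp (C * \<bar>t - t\<bar>) * kernel_norm2 t \<zeta> + kernel_norm2 t \<zeta> - 2 * kernel_norm2 t \<zeta>) (at t within I)"
    by (intro tendsto_intros kernel_norm2_tendsto t)
  then show "((\<lambda>s. exp (C * \<bar>s - t\<bar>) * kernel_norm2 s \<zeta> + kernel_norm2 t \<zeta> - 2 * kernel_norm2 s \<zeta>) \<longlongrightarrow> 0)
      (at t within I)"
    by simp
qed

lemma exp_weight_difference_quotient_tendsto:
  assumes t: "t \<in> I"
  shows "((\<lambda>s. (exp (- \<phi> t w) - exp (- \<phi> s w)) / (s - t)) \<longlongrightarrow> \<phi>' t w * exp (- \<phi> t w)) (at t within I)"
proof -
  have "((\<lambda>s. exp (- \<phi> s w)) has_real_derivative exp (- \<phi> t w) * (- \<phi>' t w)) (at t within I)"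
    using weight_derivative[OF t, of w] by (auto intro!: derivative_eq_intros)
  then have "((\<lambda>s. (exp (- \<phi> s w) - exp (- \<phi> t w)) / (s - t)) \<longlongrightarrow> exp (- \<phi> t w) * (- \<phi>' t w)) (at t within I)"
    by (simp add: has_field_derivative_iff)
  from tendsto_minus[OF this] show ?thesis
    by (simp add: minus_divide_left mult_ac)
qed

lemma exp_weight_difference_quotient_bound:
  assumes s: "s \<in> I" and t: "t \<in> I" and st: "\<bar>s - t\<bar> \<le> 1"
  shows "\<bar>(exp (- \<phi> t w) - exp (- \<phi> s w)) / (s - t)\<bar> \<le> C * exp C * exp (- \<phi> t w)"
proof (cases "s = t")
  case False
  have C: "C \<ge> 0" using C_nonneg[OF t] .
  have "\<bar>exp (- \<phi> t w) - exp (- \<phi> s w)\<bar> \<le> C * \<bar>s - t\<bar> * exp (C * \<bar>s - t\<bar>) * exp (- \<phi> t w)"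
    using weight_lipschitz[OF t s, of w] by (intro abs_exp_minus_diff_le) (simp add: abs_minus_commute)
  also have "\<dots> \<le> C * \<bar>s - t\<bar> * exp C * exp (- \<phi> t w)"
    using C st by (intro mult_right_mono mult_left_mono) (auto simp: mult_left_le)
  finally show ?thesis
    using False by (simp add: abs_divide pos_divide_le_eq mult_ac)
qed (use C_nonneg[OF t] in simp)

lemma kernel_difference_quotient_eq:
  assumes s: "s \<in> I" and t: "t \<in> I"
  shows "(K s z \<zeta> - K t z \<zeta>) /\<^sub>R (s - t)
    = (\<integral> w. K s w \<zeta> * K t z w * complex_of_real ((exp (- \<phi> t w) - exp (- \<phi> s w)) / (s - t)) \<partial>M)"
  by (simp add: kernel_diff_eq[OF s t] scaleR_conv_of_real divide_inverse mult_ac flip: integral_mult_right_zero)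

lemma kernel_difference_quotient_remainder_bound:
  assumes s: "s \<in> I" and t: "t \<in> I" and st: "\<bar>s - t\<bar> \<le> 1"
  shows "norm ((K s z \<zeta> - K t z \<zeta>) /\<^sub>R (s - t)
      - (\<integral> w. K t w \<zeta> * K t z w * complex_of_real ((exp (- \<phi> t w) - exp (- \<phi> s w)) / (s - t)) \<partial>M))
    \<le> C * exp C * sqrt (kernel_dist2 t s \<zeta>) * sqrt (kernel_norm2 t z)"
proof -
  define g where "g w = (exp (- \<phi> t w) - exp (- \<phi> s w)) / (s - t)" for w
  have gm [measurable]: "g \<in> borel_measurable M"
    using exp_weight_measurable[OF s] exp_weight_measurable[OF t] unfolding g_def by measurable
  have g: "\<bar>g w\<bar> \<le> C * exp C * sqrt (exp (- \<phi> t w)) * sqrt (exp (- \<phi> t w))" for w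
    using exp_weight_difference_quotient_bound[OF s t st, of w] by (simp add: g_def mult.assoc)
  have "(\<integral> w. K s w \<zeta> * K t z w * complex_of_real (g w) \<partial>M) - (\<integral> w. K t w \<zeta> * K t z w * complex_of_real (g w) \<partial>M)
      = (\<integral> w. (K s w \<zeta> - K t w \<zeta>) * K t z w * complex_of_real (g w) \<partial>M)"
  proof -
    have "integrable M (\<lambda>w. K u w \<zeta> * K t z w * complex_of_real (g w))" if "u \<in> I" for u
      using that t exp_weight_difference_quotient_bound[OF s t st]
      by (intro integrable_kernel_mult[where u=t and c="C * exp C"] kernel_in_Hspace gm) (auto simp: g_def)
    then show ?thesis
      using s t by (simp add: left_diff_distrib flip: Bochner_Integration.integral_diff)
  qed
  also have "norm \<dots> \<le> C * exp C * sqrt (\<integral> w. (cmod (K s w \<zeta> - K t w \<zeta>))\<^sup>2 * exp (- \<phi> t w) \<partial>M)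
      * sqrt (\<integral> w. (cmod (K t z w))\<^sup>2 * exp (- \<phi> t w) \<partial>M)"
  proof (rule norm_integral_mult_le_weighted[OF _ _ gm exp_weight_measurable[OF t] exp_weight_measurable[OF t] _ _ _ _ g])
    have "(\<lambda>w. K s w \<zeta> - K t w \<zeta>) \<in> Hspace M V (\<phi> t)"
      by (rule Hspace_diff[OF fun_space weight_measurable[OF t] kernel_in_Hspace[OF s t] kernel_in_Hspace[OF t t]])
    then show "integrable M (\<lambda>w. (cmod (K s w \<zeta> - K t w \<zeta>))\<^sup>2 * exp (- \<phi> t w))"
      using Hspace_iff_integrable[OF fun_space weight_measurable[OF t]] by simp
  qed (use s t C_nonneg[OF t] kernel_square_integrable'[OF t t] in \<open>auto intro: kernel_measurable kernel_measurable' borel_measurable_diff\<close>)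
  also have "\<dots> = C * exp C * sqrt (kernel_dist2 t s \<zeta>) * sqrt (kernel_norm2 t z)"
    by (simp add: kernel_dist2_def kernel_norm2_def kernel_cnj[OF t, of z])
  finally show ?thesis
    by (simp add: kernel_difference_quotient_eq[OF s t] g_def)
qed

lemma fixed_kernel_difference_quotient_tendsto:
  assumes t: "t \<in> I" and limpt: "t islimpt I"
  shows "((\<lambda>s. \<integral> w. K t w \<zeta> * K t z w * complex_of_real ((exp (- \<phi> t w) - exp (- \<phi> s w)) / (s - t)) \<partial>M)
    \<longlongrightarrow> (\<integral> w. K t w \<zeta> * K t z w * complex_of_real (\<phi>' t w * exp (- \<phi> t w)) \<partial>M)) (at t within I)"
proof (rule integral_dominated_convergence_at_within)
  note [measurable] = kernel_measurable[OF t] kernel_measurable'[OF t] exp_weight_measurable[OF t]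
    borel_measurable_has_real_derivative_within[OF limpt weight_measurable weight_measurable[OF t] weight_derivative[OF t]]
  note near = eventually_at_within_mem_abs_diff_le[where d=1 and t=t and S=I, simplified]
  show "integrable M (\<lambda>w. C * exp C * norm (K t w \<zeta> * K t z w * complex_of_real (exp (- \<phi> t w))))"
    using t by (intro integrable_mult_right integrable_norm integrable_kernel_mult[where c=1] kernel_in_Hspace
        exp_weight_measurable) auto
  show "(\<lambda>w. K t w \<zeta> * K t z w * complex_of_real (\<phi>' t w * exp (- \<phi> t w))) \<in> borel_measurable M"
    by measurable
  show "\<forall>\<^sub>F s in at t within I. (\<lambda>w. K t w \<zeta> * K t z w
      * complex_of_real ((exp (- \<phi> t w) - exp (- \<phi> s w)) / (s - t))) \<in> borel_measurable M"
    using near by eventually_elim (use exp_weight_measurable in measurable)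
  show "\<forall>\<^sub>F s in at t within I. AE w in M. norm (K t w \<zeta> * K t z w
      * complex_of_real ((exp (- \<phi> t w) - exp (- \<phi> s w)) / (s - t)))
        \<le> C * exp C * norm (K t w \<zeta> * K t z w * complex_of_real (exp (- \<phi> t w)))"
    using near
  proof eventually_elim
    case (elim s)
    then have s: "s \<in> I" and st: "\<bar>s - t\<bar> \<le> 1" by auto
    show ?case
    proof (rule AE_I2)
      fix w
      show "norm (K t w \<zeta> * K t z w * complex_of_real ((exp (- \<phi> t w) - exp (- \<phi> s w)) / (s - t)))
          \<le> C * exp C * norm (K t w \<zeta> * K t z w * complex_of_real (exp (- \<phi> t w)))"
        using mult_left_mono[OF exp_weight_difference_quotient_bound[OF s t st, of w], of "cmod (K t w \<zeta>) * cmod (K t z w)"]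
        by (simp add: norm_mult mult_ac del: of_real_diff of_real_divide)
    qed
  qed
  show "AE w in M. ((\<lambda>s. K t w \<zeta> * K t z w * complex_of_real ((exp (- \<phi> t w) - exp (- \<phi> s w)) / (s - t)))
      \<longlongrightarrow> K t w \<zeta> * K t z w * complex_of_real (\<phi>' t w * exp (- \<phi> t w))) (at t within I)"
    by (intro AE_I2 tendsto_mult tendsto_const tendsto_of_real exp_weight_difference_quotient_tendsto t)
qed

lemma kernel_has_vector_derivative:
  assumes t: "t \<in> I"
  shows "((\<lambda>s. K s z \<zeta>) has_vector_derivative
    (\<integral> w. complex_of_real (\<phi>' t w) * K t z w * K t w \<zeta> * complex_of_real (exp (- \<phi> t w)) \<partial>M)) (at t within I)"
proof (cases "t islimpt I")
  case True
  define P where "P s = (\<integral> w. K t w \<zeta> * K t z w * complex_of_real ((exp (- \<phi> t w) - exp (- \<phi> s w)) / (s - t)) \<partial>M)"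
    for s
  have "((\<lambda>s. (K s z \<zeta> - K t z \<zeta>) /\<^sub>R (s - t) - P s) \<longlongrightarrow> 0) (at t within I)"
  proof (rule Lim_null_comparison)
    show "\<forall>\<^sub>F s in at t within I. norm ((K s z \<zeta> - K t z \<zeta>) /\<^sub>R (s - t) - P s)
        \<le> C * exp C * sqrt (kernel_dist2 t s \<zeta>) * sqrt (kernel_norm2 t z)"
      using eventually_at_within_mem_abs_diff_le[where d=1 and t=t and S=I, simplified]
      by eventually_elim (unfold P_def, intro kernel_difference_quotient_remainder_bound t; simp)
    have "((\<lambda>s. C * exp C * sqrt (kernel_dist2 t s \<zeta>) * sqrt (kernel_norm2 t z))
        \<longlongrightarrow> C * exp C * sqrt 0 * sqrt (kernel_norm2 t z)) (at t within I)"
      by (intro tendsto_intros kernel_dist2_tendsto t)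
    then show "((\<lambda>s. C * exp C * sqrt (kernel_dist2 t s \<zeta>) * sqrt (kernel_norm2 t z)) \<longlongrightarrow> 0) (at t within I)"
      by simp
  qed
  from tendsto_add[OF this fixed_kernel_difference_quotient_tendsto[OF t True, where \<zeta>=\<zeta> and z=z, folded P_def]]
  have "((\<lambda>s. (K s z \<zeta> - K t z \<zeta>) /\<^sub>R (s - t)) \<longlongrightarrow>
      (\<integral> w. K t w \<zeta> * K t z w * complex_of_real (\<phi>' t w * exp (- \<phi> t w)) \<partial>M)) (at t within I)"
    by simp
  then show ?thesis
    by (rule has_vector_derivative_of_difference_quotient[THEN has_vector_derivative_eq_rhs]) (simp add: mult_ac)
next
  case False
  \<comment> \<open>at an isolated point of I the filter is trivial and every vector is a derivative\<close>
  then have "at t within I = bot"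
    by (simp add: trivial_limit_within)
  then show ?thesis
    by (simp add: has_vector_derivative_def has_derivative_def bounded_linear_scaleR_left)
qed

end

theorem proposition2p2:
  fixes C :: real
  shows "\<exists>A::real. \<forall>(M::'a measure) V (I::real set) (\<phi>::real \<Rightarrow> 'a \<Rightarrow> real) \<phi>' K.
     fun_space M V \<and> is_interval I
     \<and> (\<forall>t\<in>I. admissible_weight M V (\<phi> t))
     \<and> (\<forall>t\<in>I. \<forall>x. ((\<lambda>s. \<phi> s x) has_real_derivative \<phi>' t x) (at t within I))
     \<and> (\<forall>t\<in>I. \<forall>x. \<bar>\<phi>' t x\<bar> \<le> C)
     \<and> (\<forall>t\<in>I. bergman_kernel M V (\<phi> t) (K t))
     \<longrightarrow>
       (\<forall>t\<in>I. \<forall>z \<zeta>. ((\<lambda>s. K s z \<zeta>) has_vector_derivative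
            (\<integral> w. complex_of_real (\<phi>' t w) * K t z w * K t w \<zeta>
                   * complex_of_real (exp (- \<phi> t w)) \<partial>M)) (at t within I))
     \<and> (\<forall>t\<in>I. \<forall>\<tau>. t + \<tau> \<in> I \<longrightarrow> \<bar>\<tau>\<bar> \<le> 1 \<longrightarrow> (\<forall>z.
          cmod ((K (t + \<tau>) z z - K t z z) / complex_of_real \<tau>) \<le> A * cmod (K t z z)))"
  apply (intro exI[of _ "C * exp (C / 2) * (1 + C * exp (C / 2))"] allI impI)
  subgoal premises H for M V I \<phi> \<phi>' K
  proof -
    interpret bergman_weight_family M V I \<phi> \<phi>' K C
      using H admissible_weight_measurable by unfold_locales blast+
    show ?thesis
      using kernel_has_vector_derivative kernel_diag_difference_quotient_bound by blast
  qed
  done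

end
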